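(* Suppose the random walk $R$ is irreducible, aperiodic, positive recurrent and has negative drift. For $i=1,\dots,M$ let $r_i$ satisfy $$1<r_i<\inf_{n\in S:\, i\in I(n)}\frac{s^-_i(n)}{s^+_i(n)}$$ (such $r_i$ exist, i.e. the infimum is finite and strictly greater than $1$). Let $\varepsilon^*=\min_{n\in S,\, i\in I(n)}\{s^+_i(n)(1-r_i)+s^-_i(n)(1-r_i^{-1})\}$ (then $\varepsilon^*>0$). Let $v_0\ge1$, $v_1,\dots,v_M>0$, $0<\varepsilon<\varepsilon^*$, and define $$V(n)=v_0+\sum_{i=1}^M v_i r_i^{n_i},\qquad b=\varepsilon v_0+\sum_{i=1}^M v_i\Big(\sup_{n\in S}s^+_i(n)\,(r_i-1)+\varepsilon\Big),$$ $$B=\Big\{n\in S:\ n_i\le \max\Big\{\tfrac{\log(b/v_i)-\log(\varepsilon^*-\varepsilon)}{\log r_i},\,1\Big\}\ \ \forall i=1,\dots,M\Big\}.$$ Then $V:S\to[1,\infty)$, $B$ is finite, $b>0$, and for all $n\in S$, $$\sum_{u\in N_{c(n)}}p_{c(n),u}V(n+u)-V(n)\le-\varepsilon V(n)+b\,\mathbf 1_B(n),$$ i.e. $R$ is geometrically ergodic with these $V,\varepsilon,b,B$.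
   Context: Let $M\ge 1$ and $S=\{0,1,2,\dots\}^M$. For $n\in S$ let $N(n)=\{u\in\{-1,0,1\}^M: n+u\in S\}$. A partition $C=\{C_k\}_{k\in K}$ ($K$ finite) of $S$ is a family of pairwise disjoint sets covering $S$ such that $N(n)=N(n')$ whenever $n,n'$ lie in the same $C_k$; write $N_k$ for this common set and $c(n)$ for the index $k$ with $n\in C_k$. The random walk $R$ is a discrete-time Markov chain on $S$ with transition probabilities $P(n,n+u)=p_{c(n),u}\ge0$ for $u\in N_{c(n)}$, $P(n,m)=0$ if $m-n\notin N_{c(n)}$, and $\sum_{u\in N_k}p_{k,u}=1$ for every $k$. For $n\in S$, $I(n)=\{i\in\{1,\dots,M\}: n_i>0\}$, $s^+_i(n)=\sum_{u\in N_{c(n)}:u_i=1}p_{c(n),u}$ and $s^-_i(n)=\sum_{u\in N_{c(n)}:u_i=-1}p_{c(n),u}$ (a ratio $s^-_i(n)/s^+_i(n)$ with $s^+_i(n)=0$ is interpreted as $+\infty$). $R$ has negative drift if $\sup_{n\in S,\,i\in I(n)}\{s^+_i(n)-s^-_i(n)\}<0$. *)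

theory Defs
  imports "HOL-Analysis.Analysis"
begin

text \<open>States: vectors indexed by a finite type 'm (so M = CARD('m) \<ge> 1),
  with integer entries; the state space S consists of the nonnegative ones.
  Classes of the partition are indexed by a type 'k; c is the class map.
  p k u is the probability of jumping by u from a state of class k.\<close>

type_synonym 'm state = "'m \<Rightarrow> int"

definition St :: "'m state set" where
  "St = {n. \<forall>i. 0 \<le> n i}"

definition addv :: "'m state \<Rightarrow> 'm state \<Rightarrow> 'm state" where
  "addv n u = (\<lambda>i. n i + u i)"

definition Ustep :: "'m state set" where
  "Ustep = {u. \<forall>i. u i \<in> {-1, 0, 1}}"

definition Nb :: "'m state \<Rightarrow> 'm state set" where
  "Nb n = {u \<in> Ustep. addv n u \<in> St}"

definition Iset :: "'m state \<Rightarrow> 'm set" where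
  "Iset n = {i. n i > 0}"

definition is_partition :: "('m state \<Rightarrow> 'k) \<Rightarrow> bool" where
  "is_partition c \<longleftrightarrow> finite (c ` St) \<and>
     (\<forall>n\<in>St. \<forall>n'\<in>St. c n = c n' \<longrightarrow> Nb n = Nb n')"

definition is_walk :: "('m state \<Rightarrow> 'k) \<Rightarrow> ('k \<Rightarrow> 'm state \<Rightarrow> real) \<Rightarrow> bool" where
  "is_walk c p \<longleftrightarrow> is_partition c \<and>
     (\<forall>n\<in>St. (\<forall>u\<in>Nb n. 0 \<le> p (c n) u) \<and> (\<Sum>u\<in>Nb n. p (c n) u) = 1)"

definition Ptrans :: "('m state \<Rightarrow> 'k) \<Rightarrow> ('k \<Rightarrow> 'm state \<Rightarrow> real) \<Rightarrow> 'm state \<Rightarrow> 'm state \<Rightarrow> real" where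
  "Ptrans c p x y = (\<Sum>u\<in>Nb x. if addv x u = y then p (c x) u else 0)"

fun Pt :: "('m state \<Rightarrow> 'k) \<Rightarrow> ('k \<Rightarrow> 'm state \<Rightarrow> real) \<Rightarrow> nat \<Rightarrow> 'm state \<Rightarrow> 'm state \<Rightarrow> real" where
  "Pt c p 0 x y = (if x = y then 1 else 0)"
| "Pt c p (Suc t) x y = (\<Sum>u\<in>Nb x. p (c x) u * Pt c p t (addv x u) y)"

text \<open>First-passage probabilities: F t x y = probability that the walk started
  at x visits y for the first time (at a positive time) at time t.\<close>
fun Fp :: "('m state \<Rightarrow> 'k) \<Rightarrow> ('k \<Rightarrow> 'm state \<Rightarrow> real) \<Rightarrow> nat \<Rightarrow> 'm state \<Rightarrow> 'm state \<Rightarrow> real" where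
  "Fp c p 0 x y = 0"
| "Fp c p (Suc t) x y =
     (\<Sum>u\<in>Nb x. p (c x) u *
        (if addv x u = y then (if t = 0 then 1 else 0) else Fp c p t (addv x u) y))"

definition irreducible :: "('m state \<Rightarrow> 'k) \<Rightarrow> ('k \<Rightarrow> 'm state \<Rightarrow> real) \<Rightarrow> bool" where
  "irreducible c p \<longleftrightarrow> (\<forall>x\<in>St. \<forall>y\<in>St. \<exists>t. Pt c p t x y > 0)"

definition aperiodic :: "('m state \<Rightarrow> 'k) \<Rightarrow> ('k \<Rightarrow> 'm state \<Rightarrow> real) \<Rightarrow> bool" where
  "aperiodic c p \<longleftrightarrow> (\<forall>x\<in>St. Gcd {t::nat. t > 0 \<and> Pt c p t x x > 0} = 1)"

definition positive_recurrent :: "('m state \<Rightarrow> 'k) \<Rightarrow> ('k \<Rightarrow> 'm state \<Rightarrow> real) \<Rightarrow> bool" where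
  "positive_recurrent c p \<longleftrightarrow>
     (\<forall>x\<in>St. (\<lambda>t. Fp c p t x x) sums 1 \<and> summable (\<lambda>t. real t * Fp c p t x x))"

definition s_plus :: "('m state \<Rightarrow> 'k) \<Rightarrow> ('k \<Rightarrow> 'm state \<Rightarrow> real) \<Rightarrow> 'm \<Rightarrow> 'm state \<Rightarrow> real" where
  "s_plus c p i n = (\<Sum>u\<in>{u\<in>Nb n. u i = 1}. p (c n) u)"

definition s_minus :: "('m state \<Rightarrow> 'k) \<Rightarrow> ('k \<Rightarrow> 'm state \<Rightarrow> real) \<Rightarrow> 'm \<Rightarrow> 'm state \<Rightarrow> real" where
  "s_minus c p i n = (\<Sum>u\<in>{u\<in>Nb n. u i = -1}. p (c n) u)"

definition negative_drift :: "('m state \<Rightarrow> 'k) \<Rightarrow> ('k \<Rightarrow> 'm state \<Rightarrow> real) \<Rightarrow> bool" where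
  "negative_drift c p \<longleftrightarrow>
     Sup {s_plus c p i n - s_minus c p i n | n i. n \<in> St \<and> i \<in> Iset n} < 0"

definition ratio :: "('m state \<Rightarrow> 'k) \<Rightarrow> ('k \<Rightarrow> 'm state \<Rightarrow> real) \<Rightarrow> 'm \<Rightarrow> 'm state \<Rightarrow> ereal" where
  "ratio c p i n = (if s_plus c p i n = 0 then \<infinity>
                    else ereal (s_minus c p i n / s_plus c p i n))"

definition eps_star :: "('m state \<Rightarrow> 'k) \<Rightarrow> ('k \<Rightarrow> 'm state \<Rightarrow> real) \<Rightarrow> ('m \<Rightarrow> real) \<Rightarrow> real" where
  "eps_star c p r = Min {s_plus c p i n * (1 - r i) + s_minus c p i n * (1 - 1 / r i)
                         | n i. n \<in> St \<and> i \<in> Iset n}"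

definition Vfun :: "real \<Rightarrow> ('m \<Rightarrow> real) \<Rightarrow> ('m \<Rightarrow> real) \<Rightarrow> 'm state \<Rightarrow> real" where
  "Vfun v0 v r n = v0 + (\<Sum>i\<in>UNIV. v i * r i ^ nat (n i))"

definition bconst :: "('m state \<Rightarrow> 'k) \<Rightarrow> ('k \<Rightarrow> 'm state \<Rightarrow> real) \<Rightarrow> ('m \<Rightarrow> real) \<Rightarrow>
    real \<Rightarrow> ('m \<Rightarrow> real) \<Rightarrow> real \<Rightarrow> real" where
  "bconst c p r v0 v \<epsilon> = \<epsilon> * v0 +
     (\<Sum>i\<in>UNIV. v i * (Sup {s_plus c p i n * (r i - 1) | n. n \<in> St} + \<epsilon>))"

definition Bset :: "('m state \<Rightarrow> 'k) \<Rightarrow> ('k \<Rightarrow> 'm state \<Rightarrow> real) \<Rightarrow> ('m \<Rightarrow> real) \<Rightarrow>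
    real \<Rightarrow> ('m \<Rightarrow> real) \<Rightarrow> real \<Rightarrow> 'm state set" where
  "Bset c p r v0 v \<epsilon> = {n \<in> St. \<forall>i. real_of_int (n i) \<le>
      max ((ln (bconst c p r v0 v \<epsilon> / v i) - ln (eps_star c p r - \<epsilon>)) / ln (r i)) 1}"

end

theory Submission
  imports Defs
begin

text \<open>Write \<open>W\<^sub>i(n) = v\<^sub>i r\<^sub>i\<^bsup>n\<^sub>i\<^esup>\<close>. A step changes \<open>n\<^sub>i\<close> by \<open>u\<^sub>i \<in> {-1,0,1}\<close>, so in
  expectation \<open>r\<^sub>i\<^bsup>n\<^sub>i\<^esup>\<close> is multiplied by \<open>1 + g\<^sub>i(n)\<close> with
  \<open>g\<^sub>i(n) = s\<^sup>+\<^sub>i(n) (r\<^sub>i - 1) + s\<^sup>-\<^sub>i(n) (1/r\<^sub>i - 1)\<close>, and the drift of V is \<open>\<Sum>\<^sub>i W\<^sub>i(n) g\<^sub>i(n)\<close>.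
  If \<open>n\<^sub>i > 0\<close> then \<open>g\<^sub>i(n) \<le> -\<epsilon>\<^sup>*\<close> by the choice of \<open>\<epsilon>\<^sup>*\<close>; if \<open>n\<^sub>i = 0\<close> then
  \<open>W\<^sub>i(n) = v\<^sub>i\<close> and \<open>g\<^sub>i(n) \<le> sup s\<^sup>+\<^sub>i (r\<^sub>i - 1)\<close>. Hence \<open>\<Delta>V + \<epsilon> V \<le> b\<close> everywhere, and
  outside B some coordinate \<open>n\<^sub>j > 0\<close> is so large that the single term
  \<open>-W\<^sub>j(n) (\<epsilon>\<^sup>* - \<epsilon>)\<close> outweighs b. The minimum and supremum defining \<open>\<epsilon>\<^sup>*\<close> and b
  range over finite sets because \<open>s\<^sup>+\<^sub>i(n)\<close> and \<open>s\<^sup>-\<^sub>i(n)\<close> depend on n only through its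
  class.\<close>

lemma finite_funs_into:
  assumes "finite B"
  shows "finite {f :: 'a::finite \<Rightarrow> 'b. \<forall>x. f x \<in> B}"
  using finite_set_of_finite_funs[OF finite_class.finite_UNIV assms, of undefined] by simp

lemma finite_Nb: "finite (Nb (n :: 'm::finite state))"
proof -
  have "finite (Ustep :: 'm state set)"
    unfolding Ustep_def by (rule finite_funs_into) simp
  then show ?thesis
    unfolding Nb_def by simp
qed

lemma finite_image_constant_on_classes:
  assumes "finite (c ` A)"
    and "\<And>x y. x \<in> A \<Longrightarrow> y \<in> A \<Longrightarrow> c x = c y \<Longrightarrow> f x = f y"
  shows "finite (f ` A)"
proof -
  define g where "g k = f (SOME x. x \<in> A \<and> c x = k)" for k
  have "f x = g (c x)" if "x \<in> A" for x
  proof -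
    have "\<exists>y. y \<in> A \<and> c y = c x"
      using that by blast
    then have "(SOME y. y \<in> A \<and> c y = c x) \<in> A \<and> c (SOME y. y \<in> A \<and> c y = c x) = c x"
      by (rule someI_ex)
    then show ?thesis
      unfolding g_def using assms(2) that by metis
  qed
  then have "f ` A = g ` c ` A"
    by (simp add: image_comp cong: image_cong)
  then show ?thesis
    using assms(1) by simp
qed

lemma finite_image_s_plus_s_minus:
  assumes "is_partition c"
  shows "finite ((\<lambda>n. F (s_plus c p i n) (s_minus c p i n)) ` St)"
proof -
  have "finite (c ` St)"
    using assms unfolding is_partition_def by blast
  moreover have "F (s_plus c p i x) (s_minus c p i x) = F (s_plus c p i y) (s_minus c p i y)"
    if "x \<in> St" "y \<in> St" "c x = c y" for x y
  proof -
    have "Nb x = Nb y"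
      using assms that unfolding is_partition_def by blast
    then show ?thesis
      unfolding s_plus_def s_minus_def using that(3) by simp
  qed
  ultimately show ?thesis
    by (rule finite_image_constant_on_classes[of c St "\<lambda>n. F (s_plus c p i n) (s_minus c p i n)"])
qed

lemma walk_prob_nonneg: "is_walk c p \<Longrightarrow> n \<in> St \<Longrightarrow> u \<in> Nb n \<Longrightarrow> 0 \<le> p (c n) u"
  unfolding is_walk_def by blast

lemma walk_prob_sum: "is_walk c p \<Longrightarrow> n \<in> St \<Longrightarrow> (\<Sum>u\<in>Nb n. p (c n) u) = 1"
  unfolding is_walk_def by blast

lemma s_plus_nonneg: "is_walk c p \<Longrightarrow> n \<in> St \<Longrightarrow> 0 \<le> s_plus c p i n"
  unfolding s_plus_def by (rule sum_nonneg) (simp add: walk_prob_nonneg)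

lemma s_minus_nonneg: "is_walk c p \<Longrightarrow> n \<in> St \<Longrightarrow> 0 \<le> s_minus c p i n"
  unfolding s_minus_def by (rule sum_nonneg) (simp add: walk_prob_nonneg)

definition coord_drift ::
    "('m state \<Rightarrow> 'k) \<Rightarrow> ('k \<Rightarrow> 'm state \<Rightarrow> real) \<Rightarrow> ('m \<Rightarrow> real) \<Rightarrow> 'm \<Rightarrow> 'm state \<Rightarrow> real" where
  "coord_drift c p r i n = s_plus c p i n * (r i - 1) + s_minus c p i n * (1 / r i - 1)"

definition s_plus_sup :: "('m state \<Rightarrow> 'k) \<Rightarrow> ('k \<Rightarrow> 'm state \<Rightarrow> real) \<Rightarrow> ('m \<Rightarrow> real) \<Rightarrow> 'm \<Rightarrow> real" where
  "s_plus_sup c p r i = Sup {s_plus c p i n * (r i - 1) | n. n \<in> St}"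

lemma eps_star_le_neg_coord_drift:
  fixes c :: "'m::finite state \<Rightarrow> 'k"
  assumes "is_partition c" "n \<in> St" "i \<in> Iset n"
  shows "eps_star c p r \<le> - coord_drift c p r i n"
proof -
  let ?F = "\<lambda>i a b. a * (1 - r i) + b * (1 - 1 / r i)"
  have "{?F i (s_plus c p i n) (s_minus c p i n) | n i. n \<in> St \<and> i \<in> Iset n}
      \<subseteq> (\<Union>i. (\<lambda>n. ?F i (s_plus c p i n) (s_minus c p i n)) ` St)"
    by blast
  moreover have "finite ((\<lambda>n. ?F j (s_plus c p j n) (s_minus c p j n)) ` St)" for j
    using finite_image_s_plus_s_minus[OF assms(1), where F = "?F j" and i = j] .
  then have "finite (\<Union>i. (\<lambda>n. ?F i (s_plus c p i n) (s_minus c p i n)) ` St)"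
    by simp
  ultimately have "finite {?F i (s_plus c p i n) (s_minus c p i n) | n i. n \<in> St \<and> i \<in> Iset n}"
    by (rule finite_subset)
  then have "eps_star c p r \<le> ?F i (s_plus c p i n) (s_minus c p i n)"
    unfolding eps_star_def by (rule Min_le) (use assms(2,3) in blast)
  then show ?thesis
    by (simp add: coord_drift_def algebra_simps)
qed

lemma s_plus_le_s_plus_sup:
  assumes "is_partition c" "n \<in> St"
  shows "s_plus c p i n * (r i - 1) \<le> s_plus_sup c p r i"
proof -
  have "finite ((\<lambda>n. s_plus c p i n * (r i - 1)) ` St)"
    using finite_image_s_plus_s_minus[OF assms(1), where F = "\<lambda>a b. a * (r i - 1)"] .
  then show ?thesis
    unfolding s_plus_sup_def using assms(2)
    by (intro cSup_upper bdd_above_finite) (auto simp: setcompr_eq_image)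
qed

lemma s_plus_sup_nonneg:
  assumes "is_walk c p" "1 \<le> r i"
  shows "0 \<le> s_plus_sup c p r i"
proof -
  have zero: "(\<lambda>_. 0) \<in> St"
    by (simp add: St_def)
  have "0 \<le> s_plus c p i (\<lambda>_. 0) * (r i - 1)"
    using s_plus_nonneg[OF assms(1) zero] assms(2) by simp
  also have "\<dots> \<le> s_plus_sup c p r i"
    using assms(1) zero by (intro s_plus_le_s_plus_sup) (simp_all add: is_walk_def)
  finally show ?thesis .
qed

lemma coord_drift_le_s_plus_sup:
  assumes "is_walk c p" "n \<in> St" "1 \<le> r i"
  shows "coord_drift c p r i n \<le> s_plus_sup c p r i"
proof -
  have "s_minus c p i n * (1 / r i - 1) \<le> 0"
    using s_minus_nonneg[OF assms(1,2)] assms(3) by (simp add: mult_nonneg_nonpos)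
  then show ?thesis
    using s_plus_le_s_plus_sup[of c n p i r] assms by (simp add: coord_drift_def is_walk_def)
qed

lemma power_nat_add_unit:
  fixes r :: real
  assumes "0 < r" "0 \<le> a" "0 \<le> a + d" "d \<in> {-1, 0, 1}"
  shows "r ^ nat (a + d) = r ^ nat a * (1 + of_bool (d = 1) * (r - 1) + of_bool (d = -1) * (1 / r - 1))"
proof -
  consider "d = -1" | "d = 0" | "d = 1"
    using assms(4) by auto
  then show ?thesis
  proof cases
    case 1
    then have "nat a = Suc (nat (a + d))"
      using assms by auto
    then show ?thesis
      using 1 assms(1) by simp
  next
    case 3
    then have "nat (a + d) = Suc (nat a)"
      using assms by auto
    then show ?thesis
      using 3 by (simp add: algebra_simps)
  qed simp
qed

lemma expected_power_step:
  fixes c :: "'m::finite state \<Rightarrow> 'k"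
  assumes walk: "is_walk c p" and n: "n \<in> St" and r: "0 < r i"
  shows "(\<Sum>u\<in>Nb n. p (c n) u * r i ^ nat (n i + u i)) = r i ^ nat (n i) * (1 + coord_drift c p r i n)"
proof -
  let ?P = "p (c n)"
  have "(\<Sum>u\<in>Nb n. ?P u * r i ^ nat (n i + u i)) = (\<Sum>u\<in>Nb n. r i ^ nat (n i) *
      (?P u + (r i - 1) * (if u i = 1 then ?P u else 0) + (1 / r i - 1) * (if u i = -1 then ?P u else 0)))"
  proof (rule sum.cong[OF refl])
    fix u assume "u \<in> Nb n"
    then have u: "0 \<le> n i" "0 \<le> n i + u i" "u i \<in> {-1, 0, 1}"
      using n unfolding Nb_def Ustep_def St_def addv_def by auto
    show "?P u * r i ^ nat (n i + u i) = r i ^ nat (n i) *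
      (?P u + (r i - 1) * (if u i = 1 then ?P u else 0) + (1 / r i - 1) * (if u i = -1 then ?P u else 0))"
      unfolding power_nat_add_unit[OF r u] by (simp add: algebra_simps)
  qed
  also have "\<dots> = r i ^ nat (n i) * ((\<Sum>u\<in>Nb n. ?P u)
      + (r i - 1) * (\<Sum>u\<in>Nb n. if u i = 1 then ?P u else 0)
      + (1 / r i - 1) * (\<Sum>u\<in>Nb n. if u i = -1 then ?P u else 0))"
    by (simp add: sum.distrib flip: sum_distrib_left)
  also have "(\<Sum>u\<in>Nb n. if u i = 1 then ?P u else 0) = s_plus c p i n"
    unfolding s_plus_def by (rule sum.inter_filter[OF finite_Nb, symmetric])
  also have "(\<Sum>u\<in>Nb n. if u i = -1 then ?P u else 0) = s_minus c p i n"
    unfolding s_minus_def by (rule sum.inter_filter[OF finite_Nb, symmetric])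
  finally show ?thesis
    by (simp add: walk_prob_sum[OF walk n] coord_drift_def algebra_simps)
qed

definition drift ::
    "('m state \<Rightarrow> 'k) \<Rightarrow> ('k \<Rightarrow> 'm state \<Rightarrow> real) \<Rightarrow> ('m state \<Rightarrow> real) \<Rightarrow> 'm state \<Rightarrow> real" where
  "drift c p f n = (\<Sum>u\<in>Nb n. p (c n) u * f (addv n u)) - f n"

lemma drift_Vfun:
  fixes c :: "'m::finite state \<Rightarrow> 'k"
  assumes walk: "is_walk c p" and n: "n \<in> St" and r: "\<forall>i. 0 < r i"
  shows "drift c p (Vfun v0 v r) n = (\<Sum>i\<in>UNIV. v i * r i ^ nat (n i) * coord_drift c p r i n)"
proof -
  let ?P = "p (c n)"
  have "(\<Sum>u\<in>Nb n. ?P u * Vfun v0 v r (addv n u))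
      = (\<Sum>u\<in>Nb n. ?P u * v0 + (\<Sum>i\<in>UNIV. v i * (?P u * r i ^ nat (n i + u i))))"
    unfolding Vfun_def addv_def by (simp add: distrib_left sum_distrib_left mult_ac)
  also have "\<dots> = v0 * (\<Sum>u\<in>Nb n. ?P u) + (\<Sum>i\<in>UNIV. \<Sum>u\<in>Nb n. v i * (?P u * r i ^ nat (n i + u i)))"
    by (simp add: sum.distrib sum_distrib_left mult.commute sum.swap[of _ UNIV])
  also have "\<dots> = v0 + (\<Sum>i\<in>UNIV. v i * r i ^ nat (n i) * (1 + coord_drift c p r i n))"
    using r by (simp add: walk_prob_sum[OF walk n] expected_power_step[OF walk n] mult.assoc
        flip: sum_distrib_left)
  finally show ?thesis
    by (simp add: drift_def Vfun_def algebra_simps sum.distrib)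
qed

lemma one_le_Vfun:
  assumes "1 \<le> v0" "\<forall>i. 0 \<le> v i" "\<forall>i. 0 \<le> r i"
  shows "1 \<le> Vfun v0 v r n"
proof -
  have "0 \<le> (\<Sum>i\<in>UNIV. v i * r i ^ nat (n i))"
    using assms(2,3) by (simp add: sum_nonneg)
  then show ?thesis
    unfolding Vfun_def using assms(1) by linarith
qed

lemma bconst_eq:
  "bconst c p r v0 v \<epsilon> = \<epsilon> * v0 + (\<Sum>i\<in>UNIV. v i * (s_plus_sup c p r i + \<epsilon>))"
  by (simp add: bconst_def s_plus_sup_def)

lemma bconst_pos:
  fixes c :: "'m::finite state \<Rightarrow> 'k"
  assumes "is_walk c p" "\<forall>i. 1 \<le> r i" "0 \<le> v0" "\<forall>i. 0 < v i" "0 < \<epsilon>"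
  shows "0 < bconst c p r v0 v \<epsilon>"
proof -
  have "0 < v i * (s_plus_sup c p r i + \<epsilon>)" for i
    using s_plus_sup_nonneg[OF assms(1)] assms(2,4,5) by (simp add: add_nonneg_pos)
  then have "0 < (\<Sum>i\<in>UNIV. v i * (s_plus_sup c p r i + \<epsilon>))"
    by (simp add: sum_pos)
  moreover have "0 \<le> \<epsilon> * v0"
    using assms(3,5) by simp
  ultimately show ?thesis
    unfolding bconst_eq by linarith
qed

lemma finite_bounded_states:
  fixes L :: "'m::finite \<Rightarrow> real"
  shows "finite {n \<in> St. \<forall>i. real_of_int (n i) \<le> L i}"
proof -
  have "{n \<in> St. \<forall>i. real_of_int (n i) \<le> L i} \<subseteq> {n. \<forall>i. n i \<in> {0..\<lfloor>Max (range L)\<rfloor>}}"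
  proof safe
    fix n i assume "n \<in> St" "\<forall>i. real_of_int (n i) \<le> L i"
    moreover have "L i \<le> Max (range L)"
      by simp
    ultimately have "0 \<le> n i" "real_of_int (n i) \<le> Max (range L)"
      unfolding St_def by (auto intro: order_trans)
    then show "n i \<in> {0..\<lfloor>Max (range L)\<rfloor>}"
      by (simp add: le_floor_iff)
  qed
  then show ?thesis
    using finite_funs_into[of "{0..\<lfloor>Max (range L)\<rfloor>}"] by (auto intro: finite_subset)
qed

lemma finite_Bset: "finite (Bset c p r v0 v \<epsilon> :: 'm::finite state set)"
  unfolding Bset_def by (rule finite_bounded_states)

lemma less_mult_power_if_ln_quotient_less:
  fixes a d r :: real
  assumes "0 < a" "0 < d" "1 < r" "(ln a - ln d) / ln r < real k"
  shows "a < r ^ k * d"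
proof -
  have "ln a < real k * ln r + ln d"
    using assms(3,4) by (simp add: divide_less_eq)
  also have "\<dots> = ln (r ^ k * d)"
    using assms(2,3) by (simp add: ln_mult ln_realpow)
  finally show ?thesis
    using assms(1-3) by simp
qed

lemma large_coordinate_outside_Bset:
  assumes n: "n \<in> St" "n \<notin> Bset c p r v0 v \<epsilon>"
    and b: "0 < bconst c p r v0 v \<epsilon>" and eps: "\<epsilon> < eps_star c p r"
    and v: "\<forall>i. 0 < v i" and r: "\<forall>i. 1 < r i"
  obtains j where "j \<in> Iset n"
    and "bconst c p r v0 v \<epsilon> < v j * r j ^ nat (n j) * (eps_star c p r - \<epsilon>)"
proof -
  let ?b = "bconst c p r v0 v \<epsilon>" and ?E = "eps_star c p r"
  obtain j where j: "max ((ln (?b / v j) - ln (?E - \<epsilon>)) / ln (r j)) 1 < real_of_int (n j)"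
    using n by (auto simp: Bset_def not_le)
  then have "j \<in> Iset n"
    by (simp add: Iset_def)
  moreover have "?b / v j < r j ^ nat (n j) * (?E - \<epsilon>)"
    using j b v r eps by (intro less_mult_power_if_ln_quotient_less) auto
  then have "?b < v j * r j ^ nat (n j) * (?E - \<epsilon>)"
    using v by (simp add: divide_less_eq mult_ac)
  ultimately show ?thesis
    by (rule that)
qed

lemma drift_term_le_neg:
  fixes c :: "'m::finite state \<Rightarrow> 'k"
  assumes "is_partition c" "n \<in> St" "i \<in> Iset n" "0 < v i" "0 < r i"
  shows "v i * r i ^ nat (n i) * (coord_drift c p r i n + \<epsilon>)
    \<le> - (v i * r i ^ nat (n i) * (eps_star c p r - \<epsilon>))"
proof -
  have "coord_drift c p r i n + \<epsilon> \<le> - (eps_star c p r - \<epsilon>)"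
    using eps_star_le_neg_coord_drift[OF assms(1-3), where p = p and r = r] by simp
  moreover have "0 \<le> v i * r i ^ nat (n i)"
    using assms(4,5) by simp
  ultimately show ?thesis
    by (metis minus_mult_right mult_left_mono)
qed

lemma drift_term_le_sup:
  fixes c :: "'m::finite state \<Rightarrow> 'k"
  assumes walk: "is_walk c p" and n: "n \<in> St" and v: "0 < v i" and r: "1 < r i"
    and eps: "0 < \<epsilon>" "\<epsilon> < eps_star c p r"
  shows "v i * r i ^ nat (n i) * (coord_drift c p r i n + \<epsilon>) \<le> v i * (s_plus_sup c p r i + \<epsilon>)"
proof (cases "i \<in> Iset n")
  case True
  have "is_partition c"
    using walk by (simp add: is_walk_def)
  from drift_term_le_neg[where v = v and r = r and p = p and \<epsilon> = \<epsilon>, OF this n True v] r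
  have "v i * r i ^ nat (n i) * (coord_drift c p r i n + \<epsilon>) \<le> - (v i * r i ^ nat (n i) * (eps_star c p r - \<epsilon>))"
    by simp
  moreover have "0 < v i * r i ^ nat (n i) * (eps_star c p r - \<epsilon>)"
    using v r eps(2) by simp
  moreover have "0 < v i * (s_plus_sup c p r i + \<epsilon>)"
    using s_plus_sup_nonneg[OF walk] v r eps(1) by (simp add: add_nonneg_pos)
  ultimately show ?thesis
    by linarith
next
  case False
  moreover have "0 \<le> n i"
    using n by (simp add: St_def)
  ultimately have "n i = 0"
    by (simp add: Iset_def)
  then show ?thesis
    using coord_drift_le_s_plus_sup[OF walk n, of r i] v r by simp
qed

lemma drift_Vfun_le:
  fixes c :: "'m::finite state \<Rightarrow> 'k"
  assumes walk: "is_walk c p" and r: "\<forall>i. 1 < r i" and v: "\<forall>i. 0 < v i" and v0: "0 \<le> v0"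
    and eps: "0 < \<epsilon>" "\<epsilon> < eps_star c p r" and n: "n \<in> St"
  shows "drift c p (Vfun v0 v r) n
    \<le> - \<epsilon> * Vfun v0 v r n + bconst c p r v0 v \<epsilon> * indicator (Bset c p r v0 v \<epsilon>) n"
proof -
  let ?b = "bconst c p r v0 v \<epsilon>"
  define h where "h i = v i * r i ^ nat (n i) * (coord_drift c p r i n + \<epsilon>)" for i
  define w where "w i = v i * (s_plus_sup c p r i + \<epsilon>)" for i
  have part: "is_partition c"
    using walk by (simp add: is_walk_def)
  have r_pos: "\<forall>i. 0 < r i" and r_ge1: "\<forall>i. 1 \<le> r i"
    using r by (auto intro: less_trans[OF zero_less_one] less_imp_le)
  have h_le_w: "h i \<le> w i" for i
    unfolding h_def w_def using drift_term_le_sup[OF walk n] v r eps by simp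
  have "(\<Sum>i\<in>UNIV. h i) = (\<Sum>i\<in>UNIV. v i * r i ^ nat (n i) * coord_drift c p r i n)
      + \<epsilon> * (\<Sum>i\<in>UNIV. v i * r i ^ nat (n i))"
    unfolding h_def distrib_left sum.distrib by (simp add: sum_distrib_left mult.commute)
  then have "drift c p (Vfun v0 v r) n + \<epsilon> * Vfun v0 v r n = \<epsilon> * v0 + (\<Sum>i\<in>UNIV. h i)"
    unfolding drift_Vfun[OF walk n r_pos] Vfun_def by (simp add: algebra_simps)
  moreover have "\<epsilon> * v0 + (\<Sum>i\<in>UNIV. h i) \<le> ?b * indicator (Bset c p r v0 v \<epsilon>) n"
  proof (cases "n \<in> Bset c p r v0 v \<epsilon>")
    case True
    then show ?thesis
      using sum_mono[OF h_le_w] by (simp add: bconst_eq w_def)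
  next
    case False
    obtain j where j: "j \<in> Iset n" "?b < v j * r j ^ nat (n j) * (eps_star c p r - \<epsilon>)"
      using large_coordinate_outside_Bset[OF n False bconst_pos[OF walk r_ge1 v0 v eps(1)] eps(2) v r] .
    have "(\<Sum>i\<in>UNIV. h i) = h j + (\<Sum>i\<in>UNIV - {j}. h i)"
      using sum.remove[of UNIV j h] by simp
    also have "\<dots> \<le> h j + (\<Sum>i\<in>UNIV - {j}. w i)"
      using sum_mono[OF h_le_w] by simp
    also have "\<dots> = h j - w j + (\<Sum>i\<in>UNIV. w i)"
      using sum.remove[of UNIV j w] by simp
    finally have "\<epsilon> * v0 + (\<Sum>i\<in>UNIV. h i) \<le> ?b + h j - w j"
      by (simp add: bconst_eq w_def)
    moreover have "h j \<le> - (v j * r j ^ nat (n j) * (eps_star c p r - \<epsilon>))"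
      unfolding h_def using drift_term_le_neg[OF part n j(1), where v = v and r = r] v r_pos by simp
    moreover have "0 < w j"
      using s_plus_sup_nonneg[OF walk] r_ge1 v eps(1) by (simp add: w_def add_nonneg_pos)
    ultimately show ?thesis
      using False j(2) by simp
  qed
  ultimately show ?thesis
    by linarith
qed

theorem lemma4p2:
  fixes c :: "('m::finite) state \<Rightarrow> 'k"
    and p :: "'k \<Rightarrow> 'm state \<Rightarrow> real"
    and r v :: "'m \<Rightarrow> real"
    and v0 \<epsilon> :: real
  assumes walk: "is_walk c p"
    and irr: "irreducible c p"
    and aper: "aperiodic c p"
    and posrec: "positive_recurrent c p"
    and drift: "negative_drift c p"
    and r_gt1: "\<forall>i. 1 < r i"
    and r_lt: "\<forall>i. ereal (r i) < (INF n\<in>{n\<in>St. i \<in> Iset n}. ratio c p i n)"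
    and v0: "1 \<le> v0"
    and vpos: "\<forall>i. 0 < v i"
    and eps: "0 < \<epsilon>" "\<epsilon> < eps_star c p r"
  shows "0 < eps_star c p r
     \<and> (\<forall>n\<in>St. 1 \<le> Vfun v0 v r n)
     \<and> finite (Bset c p r v0 v \<epsilon>)
     \<and> 0 < bconst c p r v0 v \<epsilon>
     \<and> (\<forall>n\<in>St. (\<Sum>u\<in>Nb n. p (c n) u * Vfun v0 v r (addv n u)) - Vfun v0 v r n
              \<le> - \<epsilon> * Vfun v0 v r n
                 + bconst c p r v0 v \<epsilon> * indicator (Bset c p r v0 v \<epsilon>) n)"
proof -
  have r_pos: "\<forall>i. 0 < r i" and r_ge1: "\<forall>i. 1 \<le> r i"
    using r_gt1 by (auto intro: less_trans[OF zero_less_one] less_imp_le)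
  have "1 \<le> Vfun v0 v r n" for n
    using v0 vpos r_pos by (intro one_le_Vfun) (simp_all add: less_imp_le)
  moreover have "0 < bconst c p r v0 v \<epsilon>"
    using bconst_pos[OF walk r_ge1 _ vpos eps(1)] v0 by simp
  moreover have "drift c p (Vfun v0 v r) n
      \<le> - \<epsilon> * Vfun v0 v r n + bconst c p r v0 v \<epsilon> * indicator (Bset c p r v0 v \<epsilon>) n"
    if "n \<in> St" for n
    using drift_Vfun_le[OF walk r_gt1 vpos _ eps that] v0 by simp
  ultimately show ?thesis
    using eps finite_Bset by (simp add: drift_def)
qed

end
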